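(* Let $\Omega$ be a finite set, $V_\Omega=\mathbb{R}^\Omega$, and $V_\Upsilon,V_\Gamma\le V_\Omega$. Let $\mathcal{P}$, $\mathcal{Q}$, $\mathcal{R}$ be orthogonal decompositions of $V_\Omega$, $V_\Upsilon$, $V_\Gamma$, respectively, such that $\mathcal{Q}$ and $\mathcal{R}$ are both structure balanced in relation to $\mathcal{P}$. If $\mathbf{PQPRP}$ is symmetric for all $\mathbf{P}\in\mathcal{P}$, $\mathbf{Q}\in\mathcal{Q}$ and $\mathbf{R}\in\mathcal{R}$, then the decomposition $\mathcal{P}\vartriangleright\mathcal{Q}$ is compatible with the decomposition $\mathcal{P}\vartriangleright\mathcal{R}$, i.e. $\mathbf{BC}=\mathbf{CB}$ for all $\mathbf{B}\in\mathcal{P}\vartriangleright\mathcal{Q}$ and all $\mathbf{C}\in\mathcal{P}\vartriangleright\mathcal{R}$.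
   Context: $V_\Omega$ carries the standard inner product; all matrices are $\Omega\times\Omega$. An orthogonal decomposition of a subspace $W\le V_\Omega$ is a finite set of nonzero symmetric idempotent matrices that are mutually orthogonal and whose sum is the orthogonal projector onto $W$; zero matrices are discarded from listed decompositions. For projectors $\mathbf{A},\mathbf{B}$: $\mathbf{B}$ has first-order balance in relation to $\mathbf{A}$ if $\mathbf{BAB}=\lambda_{\mathbf{AB}}\mathbf{B}$ for a scalar $\lambda_{\mathbf{AB}}$; if $\lambda_{\mathbf{AB}}\ne0$, $\mathbf{A}\vartriangleright\mathbf{B}=\lambda_{\mathbf{AB}}^{-1}\mathbf{ABA}$. $\mathcal{B}$ is structure balanced in relation to $\mathcal{A}$ if every $\mathbf{B}\in\mathcal{B}$ has first-order balance in relation to every $\mathbf{A}\in\mathcal{A}$, and $\mathbf{B}_1\mathbf{A}\mathbf{B}_2=\mathbf{0}$ for all $\mathbf{A}\in\mathcal{A}$ and distinct $\mathbf{B}_1,\mathbf{B}_2\in\mathcal{B}$. Then $\mathbf{A}\vdash\mathcal{B}=\mathbf{A}-\sum'_{\mathbf{B}}\mathbf{A}\vartriangleright\mathbf{B}$ (sum over $\mathbf{B}$ with $\lambda_{\mathbf{AB}}\ne0$) and $\mathcal{A}\vartriangleright\mathcal{B}=\{\mathbf{A}\vartriangleright\mathbf{B}:\mathbf{A}\in\mathcal{A},\mathbf{B}\in\mathcal{B},\lambda_{\mathbf{AB}}\neq0\}\cup\{\mathbf{A}\vdash\mathcal{B}:\mathbf{A}\in\mathcal{A}\}$ (zeros discarded).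 *)

theory Defs
  imports "HOL-Analysis.Analysis"
begin

text \<open>Omega is the finite index type 'n; V_Omega = real^'n; matrices are real^'n^'n.\<close>

definition is_projector :: "real^'n^'n \<Rightarrow> bool" where
  "is_projector A \<longleftrightarrow> transpose A = A \<and> A ** A = A"

definition orth_projector_onto :: "real^'n^'n \<Rightarrow> (real^'n) set \<Rightarrow> bool" where
  "orth_projector_onto P W \<longleftrightarrow> is_projector P \<and> range (\<lambda>x. P *v x) = W"

definition orth_decomp :: "(real^'n^'n) set \<Rightarrow> (real^'n) set \<Rightarrow> bool" where
  "orth_decomp D W \<longleftrightarrow> subspace W \<and> finite D \<and>
     (\<forall>A\<in>D. A \<noteq> 0 \<and> is_projector A) \<and>
     (\<forall>A\<in>D. \<forall>B\<in>D. A \<noteq> B \<longrightarrow> A ** B = 0) \<and>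
     orth_projector_onto (\<Sum>D) W"

definition fo_balance :: "real^'n^'n \<Rightarrow> real^'n^'n \<Rightarrow> bool" where
  "fo_balance B A \<longleftrightarrow> (\<exists>l. B ** A ** B = l *\<^sub>R B)"

text \<open>The scalar lambda_AB (well-defined when B is nonzero and balanced w.r.t. A).\<close>
definition lam :: "real^'n^'n \<Rightarrow> real^'n^'n \<Rightarrow> real" where
  "lam A B = (SOME l. B ** A ** B = l *\<^sub>R B)"

definition tri :: "real^'n^'n \<Rightarrow> real^'n^'n \<Rightarrow> real^'n^'n" where
  "tri A B = inverse (lam A B) *\<^sub>R (A ** B ** A)"

definition struct_balanced :: "(real^'n^'n) set \<Rightarrow> (real^'n^'n) set \<Rightarrow> bool" where
  "struct_balanced BB AA \<longleftrightarrow>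
     (\<forall>B\<in>BB. \<forall>A\<in>AA. fo_balance B A) \<and>
     (\<forall>A\<in>AA. \<forall>B1\<in>BB. \<forall>B2\<in>BB. B1 \<noteq> B2 \<longrightarrow> B1 ** A ** B2 = 0)"

definition vdash :: "real^'n^'n \<Rightarrow> (real^'n^'n) set \<Rightarrow> real^'n^'n" where
  "vdash A BB = A - (\<Sum>B\<in>{B\<in>BB. lam A B \<noteq> 0}. tri A B)"

definition tri_set :: "(real^'n^'n) set \<Rightarrow> (real^'n^'n) set \<Rightarrow> (real^'n^'n) set" where
  "tri_set AA BB =
     ({tri A B | A B. A \<in> AA \<and> B \<in> BB \<and> lam A B \<noteq> 0} \<union> {vdash A BB | A. A \<in> AA}) - {0}"

end

theory Submission
  imports Defs
begin

text \<open>Every member of \<open>\<P> \<vartriangleright> \<Q>\<close> arises from a single \<open>P \<in> \<P>\<close> as a linear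
  combination of \<open>P\<close> and the compressions \<open>PQP\<close>; hence it is supported on the range of \<open>P\<close>
  and commutes with every matrix commuting with \<open>P\<close> and all \<open>PQP\<close>. Members coming from
  different, mutually orthogonal \<open>P\<close>'s therefore multiply to zero both ways. For a common \<open>P\<close>,
  \<open>(PQP)(PRP) = PQPRP\<close> has transpose \<open>PRPQP = (PRP)(PQP)\<close>, so its symmetry says that the
  generators of the two families commute, and then so do their linear combinations.\<close>

lemma matrix_add_rdistrib: "((A::real^'n::finite^'m) + B) ** C = A ** C + B ** C"
  by (vector matrix_matrix_mult_def sum.distrib[symmetric] field_simps)

lemma matrix_diff_ldistrib: "(A::real^'n::finite^'m) ** (B - C) = A ** B - A ** C"
  by (vector matrix_matrix_mult_def sum_subtractf[symmetric] field_simps)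

lemma matrix_diff_rdistrib: "((A::real^'n::finite^'m) - B) ** C = A ** C - B ** C"
  by (vector matrix_matrix_mult_def sum_subtractf[symmetric] field_simps)

lemma matrix_sum_ldistrib: "(A::real^'n::finite^'m) ** sum f S = (\<Sum>x\<in>S. A ** f x)"
proof (cases "finite S")
  case True
  then show ?thesis by (induction S rule: finite_induct) (auto simp: matrix_add_ldistrib)
qed simp

lemma matrix_sum_rdistrib: "sum f S ** (C::real^'n::finite^'m) = (\<Sum>x\<in>S. f x ** C)"
proof (cases "finite S")
  case True
  then show ?thesis by (induction S rule: finite_induct) (auto simp: matrix_add_rdistrib)
qed simp

lemma matrix_commute_sum:
  assumes "\<forall>x\<in>S. Y ** f x = f x ** (Y::real^'n::finite^'n)"
  shows "Y ** sum f S = sum f S ** Y"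
  using assms by (simp add: matrix_sum_ldistrib matrix_sum_rdistrib)

definition tri_pieces :: "real^'n^'n \<Rightarrow> (real^'n^'n) set \<Rightarrow> (real^'n^'n) set" where
  "tri_pieces P QQ = insert (vdash P QQ) {tri P Q | Q. Q \<in> QQ \<and> lam P Q \<noteq> 0}"

lemma tri_set_subset_tri_pieces: "tri_set PP QQ \<subseteq> (\<Union>P\<in>PP. tri_pieces P QQ)"
  by (auto simp: tri_set_def tri_pieces_def)

lemma tri_commute:
  assumes "Y ** (P ** Q ** P) = (P ** Q ** P) ** (Y::real^'n::finite^'n)"
  shows "Y ** tri P Q = tri P Q ** Y"
  using assms by (simp add: tri_def matrix_scalar_ac scalar_matrix_assoc[symmetric])

lemma vdash_commute:
  assumes "Y ** P = P ** Y" "\<forall>Q\<in>QQ. Y ** (P ** Q ** P) = (P ** Q ** P) ** (Y::real^'n::finite^'n)"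
  shows "Y ** vdash P QQ = vdash P QQ ** Y"
proof -
  have "Y ** (\<Sum>Q\<in>{Q\<in>QQ. lam P Q \<noteq> 0}. tri P Q) = (\<Sum>Q\<in>{Q\<in>QQ. lam P Q \<noteq> 0}. tri P Q) ** Y"
    using assms(2) by (intro matrix_commute_sum) (auto intro: tri_commute)
  with assms(1) show ?thesis by (simp add: vdash_def matrix_diff_ldistrib matrix_diff_rdistrib)
qed

lemma tri_pieces_commute:
  assumes "Y ** P = P ** Y" "\<forall>Q\<in>QQ. Y ** (P ** Q ** P) = (P ** Q ** P) ** (Y::real^'n::finite^'n)"
    and "B \<in> tri_pieces P QQ"
  shows "Y ** B = B ** Y"
  using assms by (auto simp: tri_pieces_def intro: tri_commute vdash_commute)

lemma tri_absorb:
  assumes "P ** P = (P::real^'n::finite^'n)"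
  shows "P ** tri P Q = tri P Q" "tri P Q ** P = tri P Q"
proof -
  have "P ** (P ** Q ** P) = P ** Q ** P" "(P ** Q ** P) ** P = P ** Q ** P"
    using assms by (metis matrix_mul_assoc)+
  then show "P ** tri P Q = tri P Q" "tri P Q ** P = tri P Q"
    by (simp_all add: tri_def matrix_scalar_ac scalar_matrix_assoc[symmetric])
qed

lemma vdash_absorb:
  assumes "P ** P = (P::real^'n::finite^'n)"
  shows "P ** vdash P QQ = vdash P QQ" "vdash P QQ ** P = vdash P QQ"
  using assms tri_absorb[OF assms]
  by (simp_all add: vdash_def matrix_diff_ldistrib matrix_diff_rdistrib
      matrix_sum_ldistrib matrix_sum_rdistrib)

lemma tri_pieces_absorb:
  assumes "P ** P = (P::real^'n::finite^'n)" "B \<in> tri_pieces P QQ"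
  shows "P ** B = B" "B ** P = B"
  using assms tri_absorb[OF assms(1)] vdash_absorb[OF assms(1)]
  by (auto simp: tri_pieces_def)

lemma tri_pieces_orthogonal:
  assumes "P ** P = P" "P' ** P' = P'" "P ** P' = (0::real^'n::finite^'n)"
    and "B \<in> tri_pieces P QQ" "C \<in> tri_pieces P' RR"
  shows "B ** C = 0"
proof -
  have "B ** C = B ** (P ** P') ** C"
    using tri_pieces_absorb[OF assms(1,4)] tri_pieces_absorb[OF assms(2,5)]
    by (metis matrix_mul_assoc)
  with assms(3) show ?thesis by simp
qed

lemma compressions_commute:
  fixes P Q R :: "real^'n::finite^'n"
  assumes "transpose P = P" "P ** P = P" "transpose Q = Q" "transpose R = R"
    and "transpose (P ** Q ** P ** R ** P) = P ** Q ** P ** R ** P"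
  shows "(P ** Q ** P) ** (P ** R ** P) = (P ** R ** P) ** (P ** Q ** P)"
proof -
  have "(P ** Q ** P) ** (P ** R ** P) = P ** Q ** P ** R ** P"
    by (metis assms(2) matrix_mul_assoc)
  also have "\<dots> = P ** R ** P ** Q ** P"
    using assms(5) by (simp add: matrix_transpose_mul assms(1,3,4) matrix_mul_assoc)
  also have "\<dots> = (P ** R ** P) ** (P ** Q ** P)"
    by (metis assms(2) matrix_mul_assoc)
  finally show ?thesis .
qed

lemma tri_pieces_commute_same:
  fixes P :: "real^'n::finite^'n"
  assumes "P ** P = P"
    and "\<forall>Q\<in>QQ. \<forall>R\<in>RR. (P ** Q ** P) ** (P ** R ** P) = (P ** R ** P) ** (P ** Q ** P)"
    and "B \<in> tri_pieces P QQ" "C \<in> tri_pieces P RR"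
  shows "B ** C = C ** B"
proof (rule tri_pieces_commute[OF _ _ assms(4)])
  have P_compression: "P ** (P ** X ** P) = (P ** X ** P) ** P" for X
    by (metis assms(1) matrix_mul_assoc)
  have "P ** B = B ** P"
    by (rule tri_pieces_commute[OF refl _ assms(3)]) (use P_compression in auto)
  then show "B ** P = P ** B" ..
  show "\<forall>R\<in>RR. B ** (P ** R ** P) = (P ** R ** P) ** B"
  proof
    fix R assume "R \<in> RR"
    then have "(P ** R ** P) ** B = B ** (P ** R ** P)"
      using assms(2) P_compression by (intro tri_pieces_commute[OF _ _ assms(3)]) auto
    then show "B ** (P ** R ** P) = (P ** R ** P) ** B" ..
  qed
qed

theorem lemma2:
  fixes PP QQ RR :: "(real^'n::finite^'n) set"
    and VU VG :: "(real^'n) set"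
  assumes "orth_decomp PP (UNIV :: (real^'n) set)"
    and "orth_decomp QQ VU"
    and "orth_decomp RR VG"
    and "struct_balanced QQ PP"
    and "struct_balanced RR PP"
    and "\<forall>P\<in>PP. \<forall>Q\<in>QQ. \<forall>R\<in>RR. transpose (P ** Q ** P ** R ** P) = P ** Q ** P ** R ** P"
  shows "\<forall>B\<in>tri_set PP QQ. \<forall>C\<in>tri_set PP RR. B ** C = C ** B"
proof (intro ballI)
  fix B C assume "B \<in> tri_set PP QQ" "C \<in> tri_set PP RR"
  then obtain P P' where P: "P \<in> PP" "B \<in> tri_pieces P QQ" and P': "P' \<in> PP" "C \<in> tri_pieces P' RR"
    using tri_set_subset_tri_pieces by blast
  have proj: "transpose X = X" "X ** X = X" if "X \<in> PP" for X
    using assms(1) that by (auto simp: orth_decomp_def is_projector_def)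
  show "B ** C = C ** B"
  proof (cases "P = P'")
    case True
    have "transpose Q = Q" if "Q \<in> QQ" for Q
      using assms(2) that by (auto simp: orth_decomp_def is_projector_def)
    moreover have "transpose R = R" if "R \<in> RR" for R
      using assms(3) that by (auto simp: orth_decomp_def is_projector_def)
    ultimately have "\<forall>Q\<in>QQ. \<forall>R\<in>RR. (P ** Q ** P) ** (P ** R ** P) = (P ** R ** P) ** (P ** Q ** P)"
      using assms(6) P(1) proj by (auto intro!: compressions_commute)
    with P(1) proj show ?thesis
      using tri_pieces_commute_same P(2) P'(2) True by blast
  next
    case False
    then have "P ** P' = 0" "P' ** P = 0"
      using assms(1) P P' by (auto simp: orth_decomp_def)
    then show ?thesis
      using tri_pieces_orthogonal P P' proj by metis
  qed
qed

end
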